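(* For every positive integer $k$, every real $0\le\gamma\le1$ and every real $x\ge k$, $$\sum_{i=0}^k\binom{x}{i}\gamma^i\ \ge\ \frac14\Big(\sum_{i=0}^k\binom{x}{i}\Big)^{\log_2(1+\gamma)}.$$
   Context: For real $y$ and integer $i\ge0$, $\binom{y}{i}=y(y-1)\cdots(y-i+1)/i!$. *)

theory Defs
  imports "HOL-Analysis.Analysis"
begin

end

theory Submission imports Defs begin

text \<open>Write \<open>S\<^sub>\<gamma>(k,x) = \<Sum>\<^sub>i\<^sub>\<le>\<^sub>k (x choose i) \<gamma>\<^sup>i\<close> and \<open>a = log\<^sub>2(1+\<gamma>)\<close>, so that \<open>2\<^sup>a = 1+\<gamma>\<close>.
  We prove the stronger bound \<open>S\<^sub>\<gamma>(k,x) \<ge> S\<^sub>1(k,x)\<^sup>a / 2\<close> by induction on \<open>\<lfloor>x\<rfloor>\<close>.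
  For \<open>k \<le> x < k+1\<close> it holds because \<open>S\<^sub>1(k,x) \<le> 2\<^sup>k\<^sup>+\<^sup>1\<close> while \<open>S\<^sub>\<gamma>(k,x) \<ge> S\<^sub>\<gamma>(k,k) = (1+\<gamma>)\<^sup>k\<close>.
  Otherwise Pascal's rule gives \<open>S\<^sub>\<gamma>(k,x) = S\<^sub>\<gamma>(k,x-1) + \<gamma> S\<^sub>\<gamma>(k-1,x-1)\<close>, and concavity of
  \<open>t\<^sup>a\<close> gives \<open>(A+B)\<^sup>a \<le> A\<^sup>a + (2\<^sup>a-1) B\<^sup>a = A\<^sup>a + \<gamma> B\<^sup>a\<close> for \<open>0 \<le> B \<le> A\<close>; applied to
  \<open>A = S\<^sub>1(k,x-1)\<close>, \<open>B = S\<^sub>1(k-1,x-1)\<close> this carries the bound from \<open>x-1\<close> to \<open>x\<close>.\<close>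

lemma powr_add_one_diff_le:
  fixes a s :: real
  assumes a: "0 \<le> a" "a \<le> 1" and s: "1 \<le> s"
  shows "(s + 1) powr a - s powr a \<le> 2 powr a - 1"
proof -
  let ?f = "\<lambda>t::real. (t + 1) powr a - t powr a"
  have "?f s \<le> ?f 1"
  proof (rule DERIV_nonpos_imp_decreasing_open[OF s])
    fix t :: real assume t: "1 < t" "t < s"
    have "(t + 1) powr (a - 1) \<le> t powr (a - 1)"
      using t a by (intro powr_mono2') auto
    then have "a * (t + 1) powr (a - 1) * 1 - a * t powr (a - 1) \<le> 0"
      using a by (simp add: mult_left_mono)
    moreover have "(?f has_real_derivative a * (t + 1) powr (a - 1) * 1 - a * t powr (a - 1)) (at t)"
      using t by (auto intro!: derivative_eq_intros)
    ultimately show "\<exists>y. (?f has_real_derivative y) (at t) \<and> y \<le> 0"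
      by blast
  qed (intro continuous_intros; auto)
  then show ?thesis by simp
qed

lemma powr_add_le_concave:
  fixes a A B :: real
  assumes a: "0 \<le> a" "a \<le> 1" and B: "0 \<le> B" "B \<le> A"
  shows "(A + B) powr a \<le> A powr a + (2 powr a - 1) * B powr a"
proof (cases "B = 0")
  case False
  then have "B > 0" using B by simp
  define s where "s = A / B"
  have s: "1 \<le> s" and A: "A = s * B" using \<open>B > 0\<close> B by (simp_all add: s_def)
  have "(A + B) powr a = (s + 1) powr a * B powr a"
    using A \<open>B > 0\<close> s by (simp add: powr_mult[symmetric] algebra_simps)
  also have "\<dots> \<le> (s powr a + (2 powr a - 1)) * B powr a"
    using powr_add_one_diff_le[OF a s] by (intro mult_right_mono) auto
  also have "\<dots> = A powr a + (2 powr a - 1) * B powr a"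
    using A \<open>B > 0\<close> s by (simp add: powr_mult algebra_simps)
  finally show ?thesis .
qed simp

lemma gbinomial_nonneg:
  fixes x :: real
  assumes "real i \<le> x + 1"
  shows "0 \<le> x gchoose i"
  unfolding gbinomial_prod_rev using assms by (auto intro!: divide_nonneg_pos prod_nonneg)

definition binomial_partial_sum :: "real \<Rightarrow> nat \<Rightarrow> real \<Rightarrow> real" where
  "binomial_partial_sum \<gamma> k x = (\<Sum>i=0..k. (x gchoose i) * \<gamma> ^ i)"

lemma binomial_partial_sum_nonneg:
  "0 \<le> \<gamma> \<Longrightarrow> real k \<le> x \<Longrightarrow> 0 \<le> binomial_partial_sum \<gamma> k x"
  unfolding binomial_partial_sum_def
  by (auto intro!: sum_nonneg mult_nonneg_nonneg gbinomial_nonneg)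

lemma binomial_partial_sum_mono:
  "0 \<le> \<gamma> \<Longrightarrow> real k \<le> y \<Longrightarrow> y \<le> x \<Longrightarrow> binomial_partial_sum \<gamma> k y \<le> binomial_partial_sum \<gamma> k x"
  unfolding binomial_partial_sum_def
  by (auto intro!: sum_mono mult_right_mono gbinomial_mono)

lemma binomial_partial_sum_Suc:
  "binomial_partial_sum \<gamma> (Suc k) x
     = binomial_partial_sum \<gamma> (Suc k) (x - 1) + \<gamma> * binomial_partial_sum \<gamma> k (x - 1)"
proof -
  have pascal: "x gchoose (Suc i) = ((x - 1) gchoose i) + ((x - 1) gchoose Suc i)" for i
    using gbinomial_Suc_Suc[of "x - 1" i] by simp
  have "binomial_partial_sum \<gamma> (Suc k) x = 1 + (\<Sum>i\<le>k. (x gchoose Suc i) * \<gamma> ^ Suc i)"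
    by (simp add: binomial_partial_sum_def atLeast0AtMost sum.atMost_Suc_shift del: sum.atMost_Suc)
  also have "\<dots> = (1 + (\<Sum>i\<le>k. ((x - 1) gchoose Suc i) * \<gamma> ^ Suc i))
                   + \<gamma> * (\<Sum>i\<le>k. ((x - 1) gchoose i) * \<gamma> ^ i)"
    by (simp add: pascal algebra_simps sum.distrib sum_distrib_left)
  finally show ?thesis
    by (simp add: binomial_partial_sum_def atLeast0AtMost sum.atMost_Suc_shift del: sum.atMost_Suc)
qed

lemma binomial_partial_sum_of_nat: "binomial_partial_sum \<gamma> k (real k) = (\<gamma> + 1) ^ k"
  by (simp add: binomial_partial_sum_def atLeast0AtMost binomial_ring binomial_gbinomial[symmetric])

lemma binomial_partial_sum_one_le: "binomial_partial_sum 1 k (real k + 1) \<le> 2 ^ (k + 1)"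
proof -
  have "binomial_partial_sum 1 k (real k + 1) = (\<Sum>i\<le>k. real (Suc k choose i))"
    by (simp add: binomial_partial_sum_def atLeast0AtMost binomial_gbinomial add.commute)
  also have "\<dots> \<le> (\<Sum>i\<le>Suc k. real (Suc k choose i))" by simp
  also have "\<dots> = 2 ^ (k + 1)"
    by (metis Suc_eq_plus1 choose_row_sum of_nat_numeral of_nat_power of_nat_sum)
  finally show ?thesis .
qed

lemma binomial_partial_sum_bound_base:
  assumes \<gamma>: "0 \<le> \<gamma>" "\<gamma> \<le> 1" and x: "real k \<le> x" "x < real k + 1"
  shows "binomial_partial_sum 1 k x powr log 2 (1 + \<gamma>) / 2 \<le> binomial_partial_sum \<gamma> k x"
proof -
  let ?a = "log 2 (1 + \<gamma>)"
  have "binomial_partial_sum 1 k x \<le> binomial_partial_sum 1 k (real k + 1)"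
    using x by (intro binomial_partial_sum_mono) auto
  also have "\<dots> \<le> 2 ^ (k + 1)" by (rule binomial_partial_sum_one_le)
  also have "\<dots> = 2 powr real (k + 1)" by (subst powr_realpow) auto
  finally have "binomial_partial_sum 1 k x powr ?a \<le> (2 powr real (k + 1)) powr ?a"
    using \<gamma> x by (intro powr_mono2) (auto simp: powr_realpow binomial_partial_sum_nonneg)
  also have "\<dots> = (2 powr ?a) powr real (k + 1)"
    by (simp add: powr_powr mult.commute)
  also have "\<dots> = (1 + \<gamma>) powr real (k + 1)"
    using \<gamma> by simp
  also have "\<dots> = (1 + \<gamma>) ^ (k + 1)"
    using \<gamma> by (subst powr_realpow) auto
  also have "\<dots> \<le> 2 * binomial_partial_sum \<gamma> k (real k)"
    using \<gamma> by (simp add: binomial_partial_sum_of_nat add.commute)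
  also have "\<dots> \<le> 2 * binomial_partial_sum \<gamma> k x"
    using \<gamma> x by (simp add: binomial_partial_sum_mono)
  finally show ?thesis by simp
qed

lemma binomial_partial_sum_bound_step:
  assumes \<gamma>: "0 \<le> \<gamma>" "\<gamma> \<le> 1" and x: "real (Suc k) + 1 \<le> x"
    and IH: "binomial_partial_sum 1 (Suc k) (x - 1) powr log 2 (1 + \<gamma>) / 2
               \<le> binomial_partial_sum \<gamma> (Suc k) (x - 1)"
            "binomial_partial_sum 1 k (x - 1) powr log 2 (1 + \<gamma>) / 2
               \<le> binomial_partial_sum \<gamma> k (x - 1)"
  shows "binomial_partial_sum 1 (Suc k) x powr log 2 (1 + \<gamma>) / 2 \<le> binomial_partial_sum \<gamma> (Suc k) x"
proof -
  let ?a = "log 2 (1 + \<gamma>)"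
  define A where "A = binomial_partial_sum 1 (Suc k) (x - 1)"
  define B where "B = binomial_partial_sum 1 k (x - 1)"
  have "0 \<le> B" using x by (simp add: B_def binomial_partial_sum_nonneg)
  moreover have "B \<le> A"
    using x by (simp add: A_def B_def binomial_partial_sum_def gbinomial_nonneg)
  moreover have "0 \<le> ?a" "?a \<le> 1" using \<gamma> by simp_all
  ultimately have "(A + B) powr ?a \<le> A powr ?a + \<gamma> * B powr ?a"
    using powr_add_le_concave[of ?a B A] \<gamma> by simp
  also have "\<dots> \<le> 2 * binomial_partial_sum \<gamma> (Suc k) (x - 1) + \<gamma> * (2 * binomial_partial_sum \<gamma> k (x - 1))"
    using IH \<gamma> unfolding A_def B_def by (intro add_mono mult_left_mono) auto
  finally show ?thesis
    using binomial_partial_sum_Suc[of 1 k x] binomial_partial_sum_Suc[of \<gamma> k x]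
    by (simp add: A_def B_def algebra_simps)
qed

lemma binomial_partial_sum_bound:
  assumes \<gamma>: "0 \<le> \<gamma>" "\<gamma> \<le> 1" and x: "real k \<le> x"
  shows "binomial_partial_sum 1 k x powr log 2 (1 + \<gamma>) / 2 \<le> binomial_partial_sum \<gamma> k x"
proof -
  obtain n :: nat where "x < real n" using reals_Archimedean2 by blast
  with x show ?thesis
  proof (induction n arbitrary: k x)
    case (Suc n)
    note IH = Suc.IH
    show ?case
    proof (cases "x < real k + 1")
      case True
      then show ?thesis using \<gamma> Suc.prems by (intro binomial_partial_sum_bound_base) auto
    next
      case False
      show ?thesis
      proof (cases k)
        case (Suc j)
        have x: "real (Suc j) + 1 \<le> x" "x - 1 < real n"
          using False \<open>x < real (Suc n)\<close> \<open>k = Suc j\<close> by auto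
        show ?thesis
          unfolding \<open>k = Suc j\<close>
        proof (rule binomial_partial_sum_bound_step[OF \<gamma> x(1)])
          show "binomial_partial_sum 1 (Suc j) (x - 1) powr log 2 (1 + \<gamma>) / 2
                  \<le> binomial_partial_sum \<gamma> (Suc j) (x - 1)"
               "binomial_partial_sum 1 j (x - 1) powr log 2 (1 + \<gamma>) / 2
                  \<le> binomial_partial_sum \<gamma> j (x - 1)"
            using x by (intro IH; simp)+
        qed
      qed (simp add: binomial_partial_sum_def)
    qed
  qed simp
qed

theorem lemma2p4:
  fixes k :: nat and \<gamma> x :: real
  assumes "k \<ge> 1" and "0 \<le> \<gamma>" and "\<gamma> \<le> 1" and "x \<ge> real k"
  shows "(\<Sum>i=0..k. (x gchoose i) * \<gamma> ^ i)
           \<ge> (1/4) * (\<Sum>i=0..k. x gchoose i) powr (log 2 (1 + \<gamma>))"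
proof -
  have "binomial_partial_sum 1 k x powr log 2 (1 + \<gamma>) / 2 \<le> binomial_partial_sum \<gamma> k x"
    using assms by (intro binomial_partial_sum_bound) auto
  moreover have "0 \<le> binomial_partial_sum \<gamma> k x"
    using assms by (intro binomial_partial_sum_nonneg) auto
  ultimately show ?thesis by (simp add: binomial_partial_sum_def)
qed

end
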